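(* Let $q\in\mathbb{C}\setminus\{0\}$, let $n\ge 1$ be an integer, and let $P,f\in\mathbb{C}[x^{-1}][[x]]$ with $P\neq 0$ satisfy $$x\,\sigma_q f+f=P .$$ Then $$L_{n,n}^P\,(f^n)=(-1)^{n(n-1)/2},$$ where $$L_{n,n}^P=\frac{1}{P_n}\left(x\sigma_q+1\right)\frac{1}{P_{n-1}}\left(x^2\sigma_q-1\right)\cdots\frac{1}{P_1}\left(x^n\sigma_q-(-1)^n\right),$$ i.e. $L_{n,n}^P=\frac{1}{P_n}\left(x^{1}\sigma_q-(-1)^{1}\right)\frac{1}{P_{n-1}}\left(x^{2}\sigma_q-(-1)^{2}\right)\cdots\frac{1}{P_1}\left(x^{n}\sigma_q-(-1)^{n}\right)$.
   Context: $\mathbb{C}[x^{-1}][[x]]$ is the field of formal Laurent series in $x$ with finitely many negative powers. $\sigma_q$ is the automorphism $\sigma_q f(x)=f(qx)$ of this field; $\sigma_q^k=\sigma_{q^k}$. Elements of the field act as multiplication operators, and products of operators denote composition. Define the sequence $P_0=0$, $P_1=P$, and $P_m=\sum_{k=0}^{m-1}(-x\sigma_q)^kP$ for $m\ge 2$ (so $(-x\sigma_q)^kP=(-x)^kq^{k(k-1)/2}\sigma_q^kP$). These $P_m$ ($m\ge1$) are nonzero, so the operator above is well defined. *)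

theory Defs
  imports "HOL-Computational_Algebra.Formal_Laurent_Series"
begin

text \<open>The q-dilation automorphism sigma_q f(x) = f(q x) on formal Laurent series:
  the coefficient of x^n is multiplied by q^n (n an integer).\<close>
lift_definition fls_sigma :: "complex \<Rightarrow> complex fls \<Rightarrow> complex fls" is
  "\<lambda>q f n. q powi n * f n"
  by (auto elim: eventually_mono)

definition Pseq :: "complex \<Rightarrow> complex fls \<Rightarrow> nat \<Rightarrow> complex fls" where
  "Pseq q P m = (\<Sum>k<m. ((\<lambda>g. - fls_X * fls_sigma q g) ^^ k) P)"

definition Lfactor :: "complex \<Rightarrow> complex fls \<Rightarrow> nat \<Rightarrow> nat \<Rightarrow> complex fls \<Rightarrow> complex fls" where
  "Lfactor q P n k g =
     inverse (Pseq q P (n + 1 - k)) * (fls_X ^ k * fls_sigma q g - (-1) ^ k * g)"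

text \<open>L^P_{n,n} = Lfactor 1 o Lfactor 2 o ... o Lfactor n (operator composition,
  the rightmost factor acting first).\<close>
definition Lnn :: "complex \<Rightarrow> complex fls \<Rightarrow> nat \<Rightarrow> complex fls \<Rightarrow> complex fls" where
  "Lnn q P n = foldr (\<lambda>k F. Lfactor q P n k \<circ> F) [1..<n+1] id"

end

theory Submission
  imports Defs
begin

(* Put y_j = P_j - f. The functional equation for f gives x sigma_q y_j = -y_(j+1), and
   y_(j+1) - y_0 = P_(j+1). For the complete homogeneous symmetric polynomials h_k this yields
   x^k sigma_q h_k(y_0,...,y_i) = (-1)^k h_k(y_1,...,y_(i+1)) and
   h_k(y_1,...,y_(i+1)) - h_k(y_0,...,y_i) = P_(i+1) h_(k-1)(y_0,...,y_(i+1)),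
   so the factor (1/P_(i+1)) (x^k sigma_q - (-1)^k) of L maps h_k(y_0,...,y_i) to
   (-1)^k h_(k-1)(y_0,...,y_(i+1)). Starting from f^n = (-1)^n h_n(y_0), the n factors
   bring the degree down to h_0 = 1, leaving only a sign. *)

unbundle fps_syntax

definition geometric_fps :: "'a::comm_ring_1 \<Rightarrow> 'a fps" where
  "geometric_fps a = Abs_fps (\<lambda>n. a ^ n)"

lemma geometric_fps_unfold: "geometric_fps a = 1 + fps_const a * fps_X * geometric_fps a"
  by (rule fps_ext) (auto simp: geometric_fps_def mult.assoc fps_X_mult_nth power_eq_if)

lemma geometric_fps_diff:
  "geometric_fps b - geometric_fps a
     = fps_const (b - a) * fps_X * (geometric_fps a * geometric_fps b)"
proof -
  let ?A = "geometric_fps a" and ?B = "geometric_fps b"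
  have "?B = ?A * ?B - fps_const a * fps_X * (?A * ?B)"
    by (subst (2) geometric_fps_unfold) (simp add: algebra_simps)
  moreover have "?A = ?A * ?B - fps_const b * fps_X * (?A * ?B)"
    by (subst (3) geometric_fps_unfold) (simp add: algebra_simps)
  ultimately have "?B - ?A = fps_const b * fps_X * (?A * ?B) - fps_const a * fps_X * (?A * ?B)"
    by (simp add: algebra_simps)
  also have "\<dots> = (fps_const b - fps_const a) * fps_X * (?A * ?B)"
    by (simp only: left_diff_distrib)
  finally show ?thesis by simp
qed

definition complete_homogeneous :: "'a::comm_ring_1 list \<Rightarrow> nat \<Rightarrow> 'a" where
  "complete_homogeneous as k = prod_list (map geometric_fps as) $ k"

lemma complete_homogeneous_Nil: "complete_homogeneous [] k = (if k = 0 then 1 else 0)"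
  by (simp add: complete_homogeneous_def)

lemma complete_homogeneous_Cons:
  "complete_homogeneous (a # as) k = (\<Sum>i\<le>k. a ^ i * complete_homogeneous as (k - i))"
  by (simp add: complete_homogeneous_def fps_mult_nth atLeast0AtMost geometric_fps_def)

lemma complete_homogeneous_0 [simp]: "complete_homogeneous as 0 = 1"
  by (induction as) (simp_all add: complete_homogeneous_Nil complete_homogeneous_Cons)

lemma complete_homogeneous_singleton: "complete_homogeneous [a] k = a ^ k"
  by (simp add: complete_homogeneous_Cons complete_homogeneous_Nil if_distrib cong: if_cong)

lemma complete_homogeneous_snoc_minus_Cons:
  "complete_homogeneous (as @ [b]) (Suc k) - complete_homogeneous (a # as) (Suc k)
     = (b - a) * complete_homogeneous (a # as @ [b]) k"
proof -
  let ?F = "prod_list (map geometric_fps as)"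
  have "prod_list (map geometric_fps (as @ [b])) - prod_list (map geometric_fps (a # as))
      = ?F * (geometric_fps b - geometric_fps a)"
    by (simp add: algebra_simps)
  also have "\<dots> = fps_const (b - a) * fps_X * prod_list (map geometric_fps (a # as @ [b]))"
    by (simp add: geometric_fps_diff algebra_simps)
  finally have "(prod_list (map geometric_fps (as @ [b])) - prod_list (map geometric_fps (a # as))) $ Suc k
      = (b - a) * prod_list (map geometric_fps (a # as @ [b])) $ k"
    by (simp add: mult.assoc)
  then show ?thesis
    by (simp add: complete_homogeneous_def)
qed

locale comm_ring_hom =
  fixes \<phi> :: "'a::comm_ring_1 \<Rightarrow> 'b::comm_ring_1"
  assumes hom_add: "\<phi> (a + b) = \<phi> a + \<phi> b"
    and hom_mult: "\<phi> (a * b) = \<phi> a * \<phi> b"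
    and hom_one: "\<phi> 1 = 1"
begin

lemma hom_zero: "\<phi> 0 = 0"
  using hom_add[of 0 0] by simp

lemma hom_uminus: "\<phi> (- a) = - \<phi> a"
  using hom_add[of a "- a"] hom_zero by (metis add.commute eq_neg_iff_add_eq_0)

lemma hom_diff: "\<phi> (a - b) = \<phi> a - \<phi> b"
  using hom_add[of a "- b"] by (simp add: hom_uminus)

lemma hom_sum: "\<phi> (sum g A) = (\<Sum>i\<in>A. \<phi> (g i))"
  by (induction A rule: infinite_finite_induct) (simp_all add: hom_zero hom_add)

lemma hom_power: "\<phi> (a ^ k) = \<phi> a ^ k"
  by (induction k) (simp_all add: hom_one hom_mult)

lemma complete_homogeneous_map:
  "c ^ k * \<phi> (complete_homogeneous as k) = complete_homogeneous (map (\<lambda>a. c * \<phi> a) as) k"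
proof (induction as arbitrary: k)
  case Nil
  then show ?case by (simp add: complete_homogeneous_Nil hom_zero hom_one)
next
  case (Cons a as)
  have "c ^ k * \<phi> (complete_homogeneous (a # as) k)
      = (\<Sum>i\<le>k. (c * \<phi> a) ^ i * (c ^ (k - i) * \<phi> (complete_homogeneous as (k - i))))"
    unfolding complete_homogeneous_Cons hom_sum sum_distrib_left
  proof (rule sum.cong)
    fix i assume "i \<in> {..k}"
    then have "c ^ k = c ^ i * c ^ (k - i)" by (simp flip: power_add)
    then show "c ^ k * \<phi> (a ^ i * complete_homogeneous as (k - i))
        = (c * \<phi> a) ^ i * (c ^ (k - i) * \<phi> (complete_homogeneous as (k - i)))"
      by (simp add: hom_mult hom_power power_mult_distrib mult_ac)
  qed simp
  then show ?case by (simp add: Cons.IH complete_homogeneous_Cons)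
qed

end

lemma comm_ring_hom_id: "comm_ring_hom id"
  by unfold_locales simp_all

lemma complete_homogeneous_scale:
  "complete_homogeneous (map (\<lambda>a. c * a) as) k = c ^ k * complete_homogeneous as k"
  using comm_ring_hom.complete_homogeneous_map[OF comm_ring_hom_id, of c k as] by simp

lemma fls_sigma_nth [simp]: "fls_sigma q f $$ n = q powi n * f $$ n"
  by transfer simp

lemma fls_subdegree_sigma:
  assumes "q \<noteq> 0" shows "fls_subdegree (fls_sigma q f) = fls_subdegree f"
proof (cases "f = 0")
  case True
  have "fls_sigma q 0 = 0" by (rule fls_eqI) simp
  with True show ?thesis by simp
next
  case False
  then show ?thesis by (intro fls_subdegree_eqI) (simp_all add: assms)
qed

lemma fls_sigma_mult:
  assumes "q \<noteq> 0" shows "fls_sigma q (a * b) = fls_sigma q a * fls_sigma q b"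
proof (rule fls_eqI)
  fix n
  show "fls_sigma q (a * b) $$ n = (fls_sigma q a * fls_sigma q b) $$ n"
    unfolding fls_sigma_nth fls_times_nth(2)[of _ _ n] fls_subdegree_sigma[OF assms] sum_distrib_left
    by (rule sum.cong) (simp_all add: assms mult_ac flip: power_int_add)
qed

lemma comm_ring_hom_fls_sigma: "q \<noteq> 0 \<Longrightarrow> comm_ring_hom (fls_sigma q)"
  by unfold_locales (auto intro: fls_eqI simp: algebra_simps fls_sigma_mult)

lemma Pseq_0 [simp]: "Pseq q P 0 = 0"
  by (simp add: Pseq_def)

lemma Pseq_Suc:
  assumes "q \<noteq> 0" shows "Pseq q P (Suc m) = P - fls_X * fls_sigma q (Pseq q P m)"
proof -
  interpret \<sigma>: comm_ring_hom "fls_sigma q" by (rule comm_ring_hom_fls_sigma[OF assms])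
  show ?thesis
    unfolding Pseq_def sum.lessThan_Suc_shift \<sigma>.hom_sum by (simp add: sum_distrib_left sum_negf)
qed

lemma funpow_X_sigma_nth_below_subdegree:
  "i < fls_subdegree P + int k \<Longrightarrow> ((\<lambda>g. - fls_X * fls_sigma q g) ^^ k) P $$ i = 0"
proof (induction k arbitrary: i)
  case 0
  then show ?case by simp
next
  case (Suc k)
  then show ?case by (simp add: fls_X_times_conv_shift)
qed

lemma Pseq_nonzero:
  assumes "P \<noteq> 0" and "m \<ge> 1" shows "Pseq q P m \<noteq> 0"
proof -
  let ?R = "\<lambda>g. - fls_X * fls_sigma q g" and ?d = "fls_subdegree P"
  obtain m' where m: "m = Suc m'" using assms(2) by (cases m) auto
  have "Pseq q P m $$ ?d = P $$ ?d + (\<Sum>k<m'. (?R ^^ Suc k) P $$ ?d)"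
    unfolding Pseq_def m sum.lessThan_Suc_shift by (simp add: fls_nth_sum del: funpow.simps)
  also have "(\<Sum>k<m'. (?R ^^ Suc k) P $$ ?d) = 0"
    by (intro sum.neutral ballI funpow_X_sigma_nth_below_subdegree) simp
  finally show ?thesis using assms(1) by auto
qed

lemma Pseq_minus_shift:
  assumes "q \<noteq> 0" and "fls_X * fls_sigma q f + f = P"
  shows "fls_X * fls_sigma q (Pseq q P j - f) = - (Pseq q P (Suc j) - f)"
proof -
  interpret \<sigma>: comm_ring_hom "fls_sigma q" by (rule comm_ring_hom_fls_sigma[OF assms(1)])
  show ?thesis
    using assms(2) by (simp add: \<sigma>.hom_diff Pseq_Suc[OF assms(1)] algebra_simps)
qed

lemma Lfactor_sign:
  assumes "q \<noteq> 0" shows "Lfactor q P n k ((-1) ^ e * g) = (-1) ^ e * Lfactor q P n k g"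
proof -
  interpret \<sigma>: comm_ring_hom "fls_sigma q" by (rule comm_ring_hom_fls_sigma[OF assms])
  show ?thesis
    unfolding Lfactor_def by (simp add: \<sigma>.hom_mult \<sigma>.hom_power \<sigma>.hom_uminus \<sigma>.hom_one algebra_simps)
qed

lemma Lfactor_complete_homogeneous:
  assumes q: "q \<noteq> 0" and "P \<noteq> 0" and f: "fls_X * fls_sigma q f + f = P"
    and n: "n = i + Suc k"
  defines "y \<equiv> \<lambda>j. Pseq q P j - f"
  shows "Lfactor q P n (Suc k) (complete_homogeneous (map y [0..<Suc i]) (Suc k))
       = (-1) ^ Suc k * complete_homogeneous (map y [0..<Suc (Suc i)]) k"
proof -
  interpret \<sigma>: comm_ring_hom "fls_sigma q" by (rule comm_ring_hom_fls_sigma[OF q])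
  let ?ys = "map y [1..<Suc i]"
  let ?H0 = "complete_homogeneous (map y [0..<Suc i]) (Suc k)"
  let ?H1 = "complete_homogeneous (map y [1..<Suc (Suc i)]) (Suc k)"
  let ?H2 = "complete_homogeneous (map y [0..<Suc (Suc i)]) k"
  have snoc: "map y [1..<Suc (Suc i)] = ?ys @ [y (Suc i)]"
    by simp
  have cons: "map y [0..<Suc j] = y 0 # map y [1..<Suc j]" for j
    by (simp add: upt_conv_Cons del: upt_Suc)
  have "[1..<Suc (Suc i)] = map Suc [0..<Suc i]"
    by (simp only: map_Suc_upt One_nat_def)
  then have shift: "map (\<lambda>g. fls_X * fls_sigma q g) (map y [0..<Suc i])
      = map (\<lambda>g. -1 * g) (map y [1..<Suc (Suc i)])"
    by (simp add: y_def Pseq_minus_shift[OF q f] del: upt_Suc)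
  have sigma_H0: "fls_X ^ Suc k * fls_sigma q ?H0 = (-1) ^ Suc k * ?H1"
    unfolding \<sigma>.complete_homogeneous_map shift complete_homogeneous_scale ..
  have H1_minus_H0: "?H1 - ?H0 = Pseq q P (Suc i) * ?H2"
    unfolding cons snoc complete_homogeneous_snoc_minus_Cons by (simp add: y_def)
  have "n + 1 - Suc k = Suc i"
    using n by simp
  then have "Lfactor q P n (Suc k) ?H0 = inverse (Pseq q P (Suc i)) * ((-1) ^ Suc k * (?H1 - ?H0))"
    unfolding Lfactor_def sigma_H0 by (simp only: right_diff_distrib)
  also have "\<dots> = (-1) ^ Suc k * ?H2"
    unfolding H1_minus_H0 using Pseq_nonzero[OF \<open>P \<noteq> 0\<close>, of "Suc i" q]
    by (simp add: field_simps del: upt_Suc)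
  finally show ?thesis .
qed

lemma Lfactors_power:
  assumes "q \<noteq> 0" and "P \<noteq> 0" and "fls_X * fls_sigma q f + f = P"
  shows "n = i + k \<Longrightarrow> foldr (\<lambda>k F. Lfactor q P n k \<circ> F) [Suc k..<Suc n] id (f ^ n)
     = (-1) ^ (n + \<Sum>{Suc k..n}) * complete_homogeneous (map (\<lambda>j. Pseq q P j - f) [0..<Suc i]) k"
proof (induction i arbitrary: k)
  case 0
  have "(-1) ^ n * (-1 * f) ^ n = (-1 * -1) ^ n * f ^ n"
    unfolding power_mult_distrib by (simp only: mult.assoc)
  then have "(-1) ^ n * (-1 * f) ^ n = f ^ n"
    by simp
  with 0 show ?case
    by (simp add: complete_homogeneous_singleton)
next
  case (Suc i)
  let ?L = "\<lambda>k. Lfactor q P n k" and ?S = "\<Sum>{Suc (Suc k)..n}"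
  let ?H = "\<lambda>i k. complete_homogeneous (map (\<lambda>j. Pseq q P j - f) [0..<Suc i]) k"
  from Suc.prems have n: "n = i + Suc k" by simp
  have factors: "[Suc k..<Suc n] = Suc k # [Suc (Suc k)..<Suc n]"
    by (rule upt_conv_Cons) (simp add: n)
  have signs: "\<Sum>{Suc k..n} = Suc k + ?S"
    by (rule sum.atLeast_Suc_atMost) (simp add: n)
  have "foldr (\<lambda>k F. ?L k \<circ> F) [Suc k..<Suc n] id (f ^ n)
      = ?L (Suc k) (foldr (\<lambda>k F. ?L k \<circ> F) [Suc (Suc k)..<Suc n] id (f ^ n))"
    unfolding factors by (simp only: foldr_Cons o_apply)
  also have "\<dots> = ?L (Suc k) ((-1) ^ (n + ?S) * ?H i (Suc k))"
    unfolding Suc.IH[OF n] ..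
  also have "\<dots> = (-1) ^ (n + ?S) * ((-1) ^ Suc k * ?H (Suc i) k)"
    unfolding Lfactor_sign[OF assms(1)] Lfactor_complete_homogeneous[OF assms n] ..
  also have "\<dots> = (-1) ^ (n + \<Sum>{Suc k..n}) * ?H (Suc i) k"
    unfolding signs power_add by (simp only: mult_ac)
  finally show ?case .
qed

lemma neg_one_power_plus_sum_atLeast1_atMost:
  "(-1 :: 'a::ring_1) ^ (n + \<Sum>{1..n}) = (-1) ^ (n * (n - 1) div 2)"
proof -
  have "\<Sum>{1..n} = n * (n + 1) div 2"
    using Sum_Icc_nat[of 1 n] by simp
  moreover have "n * (n + 1) = n * (n - 1) + n * 2"
    by (cases n) (simp_all add: algebra_simps)
  ultimately have "n + \<Sum>{1..n} = n * (n - 1) div 2 + 2 * n"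
    by simp
  then show ?thesis
    by (simp only: power_add power_mult) simp
qed

theorem theorem1:
  fixes q :: complex and n :: nat and P f :: "complex fls"
  assumes "q \<noteq> 0" and "n \<ge> 1" and "P \<noteq> 0"
    and "fls_X * fls_sigma q f + f = P"
  shows "Lnn q P n (f ^ n) = (-1) ^ (n * (n - 1) div 2)"
proof -
  have "Lnn q P n (f ^ n) = foldr (\<lambda>k F. Lfactor q P n k \<circ> F) [Suc 0..<Suc n] id (f ^ n)"
    unfolding Lnn_def by (simp only: Suc_eq_plus1 add_0)
  also have "\<dots> = (-1) ^ (n + \<Sum>{1..n})"
    using Lfactors_power[OF assms(1,3,4), of n n 0]
    by (simp only: add_0_right complete_homogeneous_0 mult_1_right One_nat_def simp_thms)
  also have "\<dots> = (-1) ^ (n * (n - 1) div 2)"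
    by (rule neg_one_power_plus_sum_atLeast1_atMost)
  finally show ?thesis .
qed

end
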